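(* Let $\mathcal{F}$ be a family of subsets of a finite set $E$ and $K\in\mathcal{F}$. Then $\mathcal{L}(M(\mathcal{F}-\{K\}))\subseteq\mathcal{L}(M(\mathcal{F}))$, i.e. every closed set of the transversal matroid $M(\mathcal{F}-\{K\})$ is a closed set of the transversal matroid $M(\mathcal{F})$.
   Context: For a family $\mathcal{F}$ of subsets of $E$, the transversal matroid $M(\mathcal{F})$ is the matroid on $E$ whose independent sets are the partial transversals of $\mathcal{F}$: sets $\{e_1,\dots,e_k\}$ of distinct elements with $e_j\in F_j$ for pairwise distinct members $F_1,\dots,F_k$ of $\mathcal{F}$. For a matroid $M$ with rank $r_M$, $cl_M(X)=\{a:r_M(X\cup\{a\})=r_M(X)\}$, and $\mathcal{L}(M)$ is the set of closed sets ($cl_M(X)=X$). $\mathcal{F}-\{K\}$ is the family obtained by removing the member $K$. *)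

theory Defs
  imports Main
begin

text \<open>A family of subsets of E is represented as an indexed family A :: 'i => 'e set
  over an index set I (so repeated members are allowed).  Removing the member K = A k
  corresponds to restricting the index set to I - {k}.\<close>

definition partial_transversal :: "'i set \<Rightarrow> ('i \<Rightarrow> 'e set) \<Rightarrow> 'e set \<Rightarrow> bool" where
  "partial_transversal I A X \<longleftrightarrow>
     finite X \<and> (\<exists>f. inj_on f X \<and> f ` X \<subseteq> I \<and> (\<forall>x\<in>X. x \<in> A (f x)))"

definition tm_rank :: "'e set \<Rightarrow> 'i set \<Rightarrow> ('i \<Rightarrow> 'e set) \<Rightarrow> 'e set \<Rightarrow> nat" where
  "tm_rank E I A X = Max {card Y | Y. Y \<subseteq> X \<inter> E \<and> partial_transversal I A Y}"

definition tm_cl :: "'e set \<Rightarrow> 'i set \<Rightarrow> ('i \<Rightarrow> 'e set) \<Rightarrow> 'e set \<Rightarrow> 'e set" where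
  "tm_cl E I A X = {a \<in> E. tm_rank E I A (X \<union> {a}) = tm_rank E I A X}"

definition tm_flats :: "'e set \<Rightarrow> 'i set \<Rightarrow> ('i \<Rightarrow> 'e set) \<Rightarrow> 'e set set" where
  "tm_flats E I A = {X. X \<subseteq> E \<and> tm_cl E I A X = X}"

end

theory Submission
  imports Defs
begin

text \<open>Write \<open>M = M(\<F>)\<close>, \<open>M' = M(\<F> - {K})\<close>, and let \<open>X\<close> be a
  flat of \<open>M'\<close> and \<open>a \<notin> X\<close>. Since \<open>a\<close> lies outside the \<open>M'\<close>-closure of \<open>X\<close>, every
  \<open>M'\<close>-basis of \<open>X\<close> stays independent when \<open>a\<close> is added. Take an \<open>M\<close>-basis \<open>J\<close> of \<open>X\<close>.
  If \<open>J\<close> is not larger than the \<open>M'\<close>-rank of \<open>X\<close>, an \<open>M'\<close>-basis of \<open>X\<close> plus \<open>a\<close> is an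
  \<open>M\<close>-independent subset of \<open>X \<union> {a}\<close> larger than \<open>J\<close>. Otherwise some \<open>j \<in> J\<close> is matched
  to \<open>K\<close>, \<open>J - {j}\<close> is an \<open>M'\<close>-basis of \<open>X\<close>, and rematching \<open>j\<close> to \<open>K\<close> shows that
  \<open>J \<union> {a}\<close> is \<open>M\<close>-independent. Either way \<open>a\<close> is not in the \<open>M\<close>-closure of \<open>X\<close>.\<close>

definition transversal_map :: "'i set \<Rightarrow> ('i \<Rightarrow> 'e set) \<Rightarrow> ('e \<Rightarrow> 'i) \<Rightarrow> 'e set \<Rightarrow> bool" where
  "transversal_map I A f X \<longleftrightarrow> inj_on f X \<and> f ` X \<subseteq> I \<and> (\<forall>x\<in>X. x \<in> A (f x))"

lemma partial_transversal_iff: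
  "partial_transversal I A X \<longleftrightarrow> finite X \<and> (\<exists>f. transversal_map I A f X)"
  unfolding partial_transversal_def transversal_map_def by blast

lemma transversal_map_insert:
  assumes "transversal_map I A f X" "y \<notin> X" "i \<in> I" "i \<notin> f ` X" "y \<in> A i"
  shows "transversal_map I A (f(y := i)) (insert y X)"
proof -
  have "inj_on (f(y := i)) X"
    using assms(1,2) by (auto simp: transversal_map_def inj_on_def)
  moreover have "(f(y := i)) ` X = f ` X" using assms(2) by auto
  ultimately show ?thesis using assms by (auto simp: transversal_map_def)
qed

text \<open>Induction on the number of elements of \<open>X\<close> on which \<open>f\<close> and \<open>g\<close> disagree: a
  member \<open>g y\<close> unused by \<open>f\<close> either matches a new element \<open>y\<close>, or \<open>y \<in> X\<close> and
  reassigning \<open>f y := g y\<close> reduces the disagreement.\<close>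
lemma transversal_map_augment:
  assumes "finite X" "finite Y" "transversal_map I A g Y" "card X < card Y"
    and "transversal_map I A f X"
  shows "\<exists>y\<in>Y - X. \<exists>h. transversal_map I A h (insert y X)"
  using assms(5)
proof (induction "card {x\<in>X. f x \<noteq> g x}" arbitrary: f rule: less_induct)
  case (less f)
  have "card (f ` X) < card (g ` Y)"
    using assms card_image_le[of X f] card_image[of g Y]
    by (auto simp: transversal_map_def)
  then have "\<not> g ` Y \<subseteq> f ` X"
    using assms(1) card_mono by (metis finite_imageI leD)
  then obtain y where y: "y \<in> Y" "g y \<notin> f ` X" by blast
  have gy: "g y \<in> I" "y \<in> A (g y)"
    using assms(3) y(1) by (auto simp: transversal_map_def)
  show ?case
  proof (cases "y \<in> X")
    case False
    then show ?thesis
      using transversal_map_insert[OF less.prems False gy(1) y(2) gy(2)] y(1) by blast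
  next
    case True
    let ?f = "f(y := g y)"
    have "f y \<noteq> g y" using y True by (metis imageI)
    then have "{x\<in>X. ?f x \<noteq> g x} = {x\<in>X. f x \<noteq> g x} - {y}"
      "y \<in> {x\<in>X. f x \<noteq> g x}"
      using True by auto
    then have "card {x\<in>X. ?f x \<noteq> g x} < card {x\<in>X. f x \<noteq> g x}"
      using assms(1) by (metis (no_types, lifting) card_Diff1_less finite_subset mem_Collect_eq subsetI)
    moreover have "transversal_map I A ?f X"
      using less.prems y gy True by (auto simp: transversal_map_def intro: inj_on_fun_updI)
    ultimately show ?thesis using less.hyps by blast
  qed
qed

lemma partial_transversal_augment:
  assumes "partial_transversal I A X" "partial_transversal I A Y" "card X < card Y"
  shows "\<exists>y\<in>Y - X. partial_transversal I A (insert y X)"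
  using assms transversal_map_augment[of X Y I A _ _]
  unfolding partial_transversal_iff by (metis finite_insert)

lemma partial_transversal_mono_index:
  "partial_transversal I' A X \<Longrightarrow> I' \<subseteq> I \<Longrightarrow> partial_transversal I A X"
  unfolding partial_transversal_def by blast

lemma partial_transversal_remove_index:
  assumes "partial_transversal I A J"
  shows "partial_transversal (I - {k}) A J \<or>
    (\<exists>j\<in>J. j \<in> A k \<and> partial_transversal (I - {k}) A (J - {j}))"
proof -
  obtain f where f: "finite J" "transversal_map I A f J"
    using assms by (auto simp: partial_transversal_iff)
  show ?thesis
  proof (cases "k \<in> f ` J")
    case True
    then obtain j where j: "j \<in> J" "f j = k" by blast
    have "transversal_map (I - {k}) A f (J - {j})"
      using f(2) j by (auto simp: transversal_map_def inj_on_def)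
    moreover have "j \<in> A k" using f(2) j by (auto simp: transversal_map_def)
    ultimately show ?thesis using f(1) j(1) by (auto simp: partial_transversal_iff)
  next
    case False
    then have "transversal_map (I - {k}) A f J" using f(2) by (auto simp: transversal_map_def)
    then show ?thesis using f(1) by (auto simp: partial_transversal_iff)
  qed
qed

lemma partial_transversal_insert_index:
  assumes "partial_transversal (I - {k}) A B" "k \<in> I" "j \<notin> B" "j \<in> A k"
  shows "partial_transversal I A (insert j B)"
proof -
  obtain g where g: "finite B" "transversal_map (I - {k}) A g B"
    using assms(1) by (auto simp: partial_transversal_iff)
  have "transversal_map I A g B" "k \<notin> g ` B"
    using g(2) by (auto simp: transversal_map_def)
  then show ?thesis
    using transversal_map_insert[of I A g B j k] assms g(1)
    by (auto simp: partial_transversal_iff)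
qed

lemma finite_tm_rank_candidates:
  "finite E \<Longrightarrow> finite {card Y |Y. Y \<subseteq> X \<inter> E \<and> partial_transversal I A Y}"
  by (rule finite_subset[of _ "{..card E}"]) (auto intro: card_mono)

lemma card_le_tm_rank:
  assumes "finite E" "Y \<subseteq> X \<inter> E" "partial_transversal I A Y"
  shows "card Y \<le> tm_rank E I A X"
  unfolding tm_rank_def using finite_tm_rank_candidates[OF assms(1)] assms(2,3)
  by (intro Max_ge) auto

lemma tm_rank_obtain_basis:
  assumes "finite E"
  obtains B where "B \<subseteq> X \<inter> E" "partial_transversal I A B" "card B = tm_rank E I A X"
proof -
  have "partial_transversal I A {}" by (simp add: partial_transversal_iff transversal_map_def)
  then have "tm_rank E I A X \<in> {card Y |Y. Y \<subseteq> X \<inter> E \<and> partial_transversal I A Y}"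
    unfolding tm_rank_def by (intro Max_in finite_tm_rank_candidates[OF assms]) blast
  then show ?thesis using that by auto
qed

lemma card_le_tm_rank_of_mem_tm_cl:
  assumes "finite E" "a \<in> tm_cl E I A X" "Y \<subseteq> insert a X \<inter> E" "partial_transversal I A Y"
  shows "card Y \<le> tm_rank E I A X"
  using card_le_tm_rank[OF assms(1) _ assms(4), of "X \<union> {a}"] assms(2,3) by (auto simp: tm_cl_def)

text \<open>The augmentation property turns a larger independent subset of \<open>X \<union> {a}\<close> into an
  extension of \<open>B\<close>; by maximality of \<open>B\<close> within \<open>X\<close> the added element must be \<open>a\<close>.\<close>
lemma partial_transversal_insert_of_notin_tm_cl:
  assumes "finite E" "X \<subseteq> E" "a \<in> E" "a \<notin> tm_cl E I A X"
    and B: "B \<subseteq> X" "partial_transversal I A B" "card B = tm_rank E I A X"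
  shows "partial_transversal I A (insert a B)"
proof -
  obtain Y where Y: "Y \<subseteq> (X \<union> {a}) \<inter> E" "partial_transversal I A Y"
    "card Y = tm_rank E I A (X \<union> {a})"
    by (rule tm_rank_obtain_basis[OF assms(1)])
  have "tm_rank E I A (X \<union> {a}) \<noteq> tm_rank E I A X" using assms(3,4) by (simp add: tm_cl_def)
  moreover have "card B \<le> card Y"
    using card_le_tm_rank[OF assms(1), of B "X \<union> {a}"] B assms(2) Y(3) by auto
  ultimately have "card B < card Y" using B(3) Y(3) by linarith
  then obtain y where y: "y \<in> Y - B" "partial_transversal I A (insert y B)"
    using partial_transversal_augment[OF B(2) Y(2)] by blast
  have "y = a"
  proof (rule ccontr)
    assume "y \<noteq> a"
    then have "card (insert y B) \<le> card B"
      using card_le_tm_rank[OF assms(1) _ y(2), of X] y Y(1) B assms(2) by auto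
    moreover have "card (insert y B) = card B + 1"
      using y B(2) by (auto simp: partial_transversal_iff)
    ultimately show False by simp
  qed
  then show ?thesis using y by simp
qed

lemma partial_transversal_insert_of_notin_tm_cl_remove_index:
  assumes "finite E" "X \<subseteq> E" "k \<in> I" "a \<in> E" "a \<notin> X" "a \<notin> tm_cl E (I - {k}) A X"
  obtains B where "B \<subseteq> X" "partial_transversal I A (insert a B)" "tm_rank E I A X \<le> card B"
proof -
  have extend: "partial_transversal (I - {k}) A (insert a B)"
    if "B \<subseteq> X" "partial_transversal (I - {k}) A B" "card B = tm_rank E (I - {k}) A X" for B
    using partial_transversal_insert_of_notin_tm_cl[OF assms(1,2,4,6)] that by blast
  obtain J where J: "J \<subseteq> X" "partial_transversal I A J" "card J = tm_rank E I A X"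
    using tm_rank_obtain_basis[OF assms(1)] by (metis le_inf_iff)
  show ?thesis
  proof (cases "card J \<le> tm_rank E (I - {k}) A X")
    case True
    obtain B where B: "B \<subseteq> X" "partial_transversal (I - {k}) A B"
      "card B = tm_rank E (I - {k}) A X"
      using tm_rank_obtain_basis[OF assms(1)] by (metis le_inf_iff)
    have "partial_transversal I A (insert a B)"
      using partial_transversal_mono_index[OF extend[OF B]] by blast
    then show ?thesis using that B(1,3) J(3) True by simp
  next
    case False
    then have "\<not> partial_transversal (I - {k}) A J"
      using card_le_tm_rank[OF assms(1), of J X] J(1) assms(2) by auto
    then obtain j where j: "j \<in> J" "j \<in> A k" "partial_transversal (I - {k}) A (J - {j})"
      using partial_transversal_remove_index[OF J(2)] by blast
    have "card (J - {j}) \<le> tm_rank E (I - {k}) A X"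
      using card_le_tm_rank[OF assms(1) _ j(3), of X] J(1) assms(2) by auto
    moreover have "card (J - {j}) = card J - 1"
      using j(1) J(2) by (auto simp: partial_transversal_iff)
    ultimately have "card (J - {j}) = tm_rank E (I - {k}) A X" using False by linarith
    then have "partial_transversal (I - {k}) A (insert a (J - {j}))"
      using extend J(1) j(3) by blast
    then have "partial_transversal I A (insert j (insert a (J - {j})))"
      by (rule partial_transversal_insert_index) (use assms(3,5) J(1) j(1,2) in auto)
    moreover have "insert j (insert a (J - {j})) = insert a J" using j(1) by auto
    ultimately show ?thesis using that J(1,3) by simp
  qed
qed

lemma tm_cl_subset_tm_cl_remove_index:
  assumes "finite E" "X \<subseteq> E" "k \<in> I"
  shows "tm_cl E I A X \<subseteq> X \<union> tm_cl E (I - {k}) A X"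
proof
  fix a assume a: "a \<in> tm_cl E I A X"
  show "a \<in> X \<union> tm_cl E (I - {k}) A X"
  proof (rule ccontr)
    assume "a \<notin> X \<union> tm_cl E (I - {k}) A X"
    moreover have "a \<in> E" using a by (simp add: tm_cl_def)
    ultimately obtain B where B: "B \<subseteq> X" "partial_transversal I A (insert a B)"
      "tm_rank E I A X \<le> card B"
      using partial_transversal_insert_of_notin_tm_cl_remove_index[OF assms] by blast
    have "card (insert a B) \<le> tm_rank E I A X"
      using card_le_tm_rank_of_mem_tm_cl[OF assms(1) a _ B(2)] B(1) assms(2) \<open>a \<in> E\<close> by auto
    moreover have "a \<notin> B" "finite B"
      using B(1,2) \<open>a \<notin> X \<union> _\<close> by (auto simp: partial_transversal_def)
    ultimately show False using B(3) by simp
  qed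
qed

theorem theorem15:
  fixes E :: "'e set" and I :: "'i set" and A :: "'i \<Rightarrow> 'e set" and k :: 'i
  assumes "finite E" and "finite I" and "\<forall>i\<in>I. A i \<subseteq> E" and "k \<in> I"
  shows "tm_flats E (I - {k}) A \<subseteq> tm_flats E I A"
proof
  fix X assume "X \<in> tm_flats E (I - {k}) A"
  then have XE: "X \<subseteq> E" and closed: "tm_cl E (I - {k}) A X = X" by (auto simp: tm_flats_def)
  have "X \<subseteq> tm_cl E I A X" using XE by (auto simp: tm_cl_def insert_absorb)
  moreover have "tm_cl E I A X \<subseteq> X"
    using tm_cl_subset_tm_cl_remove_index[OF assms(1) XE assms(4), of A] closed by simp
  ultimately show "X \<in> tm_flats E I A" using XE by (auto simp: tm_flats_def)
qed

end
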